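(* Let $\mathrm{cleaf}_3:\mathbb{R}\to\mathbb{R}$ be the leaf function of basis $3$ and write $c=\mathrm{cleaf}_3(l)$. For every real $l$, $$\mathrm{cleaf}_3(2l)=\frac{2c^2+2c^4-1}{\sqrt{1+8c^2+8c^6-8c^8}}.$$
   Context: For a natural number $n$, the leaf function $\mathrm{cleaf}_n:\mathbb{R}\to\mathbb{R}$ is the solution of $\frac{\mathrm{d}^2r}{\mathrm{d}l^2}=-n\,r^{2n-1}$ with $r(0)=1$, $r'(0)=0$. *)

theory Defs
  imports Complex_Main
begin

definition leaf_ivp :: "nat \<Rightarrow> (real \<Rightarrow> real) \<Rightarrow> bool" where
  "leaf_ivp n r \<longleftrightarrow>
     (\<exists>r'. (\<forall>l. (r has_real_derivative r' l) (at l)) \<and>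
           (\<forall>l. (r' has_real_derivative (- real n * r l ^ (2 * n - 1))) (at l)) \<and>
           r 0 = 1 \<and> r' 0 = 0)"

definition cleaf :: "nat \<Rightarrow> real \<Rightarrow> real" where
  "cleaf n = (THE r. leaf_ivp n r)"

end

(*
  Every solution of r'' = -3 r^5 conserves the energy (r')^2 + r^6, which equals 1 for
  cleaf_3. Writing D(c) for the right-hand side of the duplication formula, a direct
  computation with the chain rule and (r')^2 = 1 - r^6 shows that t |-> D(r(t/2)) again
  solves the initial value problem; here the energy keeps |r| <= 1, where the denominator
  of D is at least 1. Solutions are unique by a Gronwall argument, since r^5 is Lipschitz
  on [-1,1]; hence D(r(t/2)) = r(t). Uniqueness alone does not make cleaf_3 meaningful,
  so existence is proved as well: the substitution r = 1 - w^2 turns the energy equation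
  into the nonsingular equation w' = sqrt(P(w))/2 with w^2 P(w) = 1 - (1 - w^2)^6, which
  is solved near 0 by inverting t(w) = integral of 2/sqrt(P), and the duplication map
  extends a solution on (-a,a) to (-2a,2a), hence to the whole line.
*)
theory Submission
  imports Defs "HOL-Analysis.Analysis"
begin

lemma abs_power_diff_le:
  fixes x y :: real
  assumes "\<bar>x\<bar> \<le> 1" "\<bar>y\<bar> \<le> 1"
  shows "\<bar>x ^ n - y ^ n\<bar> \<le> n * \<bar>x - y\<bar>"
proof (induction n)
  case 0
  then show ?case by simp
next
  case (Suc n)
  have "\<bar>x ^ Suc n - y ^ Suc n\<bar> = \<bar>x * (x ^ n - y ^ n) + (x - y) * y ^ n\<bar>"
    by (simp add: algebra_simps)
  also have "\<dots> \<le> \<bar>x\<bar> * \<bar>x ^ n - y ^ n\<bar> + \<bar>x - y\<bar> * \<bar>y\<bar> ^ n"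
    by (metis abs_mult abs_triangle_ineq power_abs)
  also have "\<dots> \<le> 1 * (n * \<bar>x - y\<bar>) + \<bar>x - y\<bar> * 1"
    using assms Suc.IH by (intro add_mono mult_mono mult_left_mono power_le_one) auto
  finally show ?case by (simp add: algebra_simps)
qed

lemma deriv_le_multiple_imp_nonpos:
  fixes w w' :: "real \<Rightarrow> real"
  assumes "0 \<le> t" "w 0 = 0"
    and "\<And>x. 0 \<le> x \<Longrightarrow> x \<le> t \<Longrightarrow> (w has_real_derivative w' x) (at x)"
    and "\<And>x. 0 \<le> x \<Longrightarrow> x \<le> t \<Longrightarrow> w' x \<le> K * w x"
  shows "w t \<le> 0"
proof -
  define u where "u x = exp (- K * x) * w x" for x
  have "u t \<le> u 0"
  proof (rule DERIV_nonpos_imp_nonincreasing[OF \<open>0 \<le> t\<close>])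
    fix x assume x: "0 \<le> x" "x \<le> t"
    have "(u has_real_derivative exp (- K * x) * (w' x - K * w x)) (at x)"
      unfolding u_def[abs_def] using assms(3)[OF x]
      by (auto intro!: derivative_eq_intros simp: algebra_simps)
    moreover have "exp (- K * x) * (w' x - K * w x) \<le> 0"
      using assms(4)[OF x] by (simp add: mult_nonneg_nonpos)
    ultimately show "\<exists>y. (u has_real_derivative y) (at x) \<and> y \<le> 0" by blast
  qed
  then show ?thesis by (simp add: u_def assms(2) mult_le_0_iff)
qed

lemma gronwall_vanishing:
  fixes w w' :: "real \<Rightarrow> real"
  assumes deriv: "\<And>x. \<bar>x\<bar> < b \<Longrightarrow> (w has_real_derivative w' x) (at x)"
    and dominated: "\<And>x. \<bar>x\<bar> < b \<Longrightarrow> \<bar>w' x\<bar> \<le> K * w x"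
    and nonneg: "\<And>x. 0 \<le> w x" and "w 0 = 0" and "\<bar>t\<bar> < b"
  shows "w t = 0"
proof (cases "0 \<le> t")
  case True
  have "w t \<le> 0"
  proof (rule deriv_le_multiple_imp_nonpos[of t w w' K])
    fix x assume x: "0 \<le> x" "x \<le> t"
    then have "\<bar>x\<bar> < b" using \<open>\<bar>t\<bar> < b\<close> by simp
    then show "(w has_real_derivative w' x) (at x)" "w' x \<le> K * w x"
      using deriv dominated[of x] by auto
  qed (use True \<open>w 0 = 0\<close> in auto)
  then show ?thesis using nonneg[of t] by simp
next
  case False
  have "w (- (- t)) \<le> 0"
  proof (rule deriv_le_multiple_imp_nonpos[of "- t" "\<lambda>x. w (- x)" "\<lambda>x. - w' (- x)" K])
    fix x assume x: "0 \<le> x" "x \<le> - t"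
    then have "\<bar>- x\<bar> < b" using False \<open>\<bar>t\<bar> < b\<close> by simp
    then show "((\<lambda>x. w (- x)) has_real_derivative - w' (- x)) (at x)"
      "- w' (- x) \<le> K * w (- x)"
      using DERIV_mirror[THEN iffD1, OF deriv[of "- x"]] dominated[of "- x"] by auto
  qed (use False \<open>w 0 = 0\<close> in auto)
  then show ?thesis using nonneg[of t] by simp
qed

lemma deriv_pos_imp_strict_mono_on:
  fixes f f' :: "real \<Rightarrow> real"
  assumes deriv: "\<And>x. a \<le> x \<Longrightarrow> x \<le> b \<Longrightarrow> (f has_real_derivative f' x) (at x)"
    and pos: "\<And>x. a \<le> x \<Longrightarrow> x \<le> b \<Longrightarrow> 0 < f' x"
  shows "strict_mono_on {a..b} f"
proof (rule strict_mono_onI)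
  fix x x' assume "x \<in> {a..b}" "x' \<in> {a..b}" "x < x'"
  then show "f x < f x'"
  proof (intro DERIV_pos_imp_increasing[OF \<open>x < x'\<close>])
    fix z assume "x \<le> z" "z \<le> x'"
    then have "a \<le> z" "z \<le> b" using \<open>x \<in> {a..b}\<close> \<open>x' \<in> {a..b}\<close> by auto
    then show "\<exists>d. (f has_real_derivative d) (at z) \<and> 0 < d"
      using deriv pos by blast
  qed
qed

lemma inv_into_increasing_has_real_derivative:
  fixes f f' :: "real \<Rightarrow> real"
  assumes deriv: "\<And>x. a \<le> x \<Longrightarrow> x \<le> b \<Longrightarrow> (f has_real_derivative f' x) (at x)"
    and pos: "\<And>x. a \<le> x \<Longrightarrow> x \<le> b \<Longrightarrow> 0 < f' x"
    and "a < b" and y: "f a < y" "y < f b"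
  shows "a < inv_into {a..b} f y \<and> inv_into {a..b} f y < b \<and> f (inv_into {a..b} f y) = y \<and>
    (inv_into {a..b} f has_real_derivative inverse (f' (inv_into {a..b} f y))) (at y)"
proof -
  define g where "g = inv_into {a..b} f"
  have "inj_on f {a..b}"
    using deriv_pos_imp_strict_mono_on[OF deriv pos] by (rule strict_mono_on_imp_inj_on)
  then have g_f: "g (f x) = x" if "a \<le> x" "x \<le> b" for x
    using that by (simp add: g_def)
  have cont: "isCont f x" if "a \<le> x" "x \<le> b" for x
    using deriv[OF that] by (rule DERIV_isCont)
  then have "continuous_on {a..b} f"
    by (intro continuous_at_imp_continuous_on) auto
  have inv: "a < g z \<and> g z < b \<and> f (g z) = z" if z: "f a < z" "z < f b" for z
  proof -
    obtain x where x: "a \<le> x" "x \<le> b" "f x = z"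
      using IVT'[of f a z b] z \<open>a < b\<close> \<open>continuous_on {a..b} f\<close> by auto
    moreover have "x \<noteq> a" "x \<noteq> b" using x z by auto
    ultimately show ?thesis using g_f by auto
  qed
  have "(g has_real_derivative inverse (f' (g y))) (at y)"
  proof (rule DERIV_inverse_function[where a = "f a" and b = "f b"])
    show "(f has_real_derivative f' (g y)) (at (g y))" "f' (g y) \<noteq> 0"
      using inv[OF y] deriv pos[of "g y"] by auto
    show "isCont g y"
      using isCont_inverse_function2[where a = a and x = "g y" and b = b and f = f and g = g]
        inv[OF y] g_f cont by auto
  qed (use y inv in auto)
  then show ?thesis using inv[OF y] by (simp add: g_def)
qed

section \<open>Solutions of the leaf system on an interval\<close>

(* The energy identity is part of the definition: it keeps |r| <= 1, which both the
   uniqueness proof and the duplication formula need. *)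
definition leaf3_on :: "real \<Rightarrow> (real \<Rightarrow> real) \<Rightarrow> (real \<Rightarrow> real) \<Rightarrow> bool" where
  "leaf3_on b r r' \<longleftrightarrow> (\<forall>t. \<bar>t\<bar> < b \<longrightarrow>
     (r has_real_derivative r' t) (at t) \<and> (r' has_real_derivative - 3 * r t ^ 5) (at t) \<and>
     r' t ^ 2 + r t ^ 6 = 1)"

lemma leaf3_onD:
  assumes "leaf3_on b r r'" "\<bar>t\<bar> < b"
  shows "(r has_real_derivative r' t) (at t)" "(r' has_real_derivative - 3 * r t ^ 5) (at t)"
    and "r' t ^ 2 + r t ^ 6 = 1"
  using assms unfolding leaf3_on_def by blast+

lemma leaf3_on_mono: "leaf3_on b r r' \<Longrightarrow> c \<le> b \<Longrightarrow> leaf3_on c r r'"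
  unfolding leaf3_on_def by auto

lemma leaf3_on_abs_le_one:
  assumes "leaf3_on b r r'" "\<bar>t\<bar> < b"
  shows "\<bar>r t\<bar> \<le> 1"
proof -
  have "r t ^ 6 \<le> 1"
    using leaf3_onD(3)[OF assms] zero_le_power2[of "r' t"] by linarith
  then show ?thesis using power_le_one_iff[of "\<bar>r t\<bar>" 6] by simp
qed

lemma leaf3_on_unique:
  assumes sol1: "leaf3_on b r1 r1'" and sol2: "leaf3_on b r2 r2'"
    and init: "r1 0 = r2 0" "r1' 0 = r2' 0" and "\<bar>t\<bar> < b"
  shows "r1 t = r2 t \<and> r1' t = r2' t"
proof -
  define w where "w x = (r1 x - r2 x)^2 + (r1' x - r2' x)^2" for x
  define w' where "w' x = 2 * (r1 x - r2 x) * (r1' x - r2' x)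
    - 6 * (r1' x - r2' x) * (r1 x ^ 5 - r2 x ^ 5)" for x
  have "w t = 0"
  proof (rule gronwall_vanishing[of b w w' 16])
    fix x assume x: "\<bar>x\<bar> < b"
    show "(w has_real_derivative w' x) (at x)"
      unfolding w_def[abs_def] w'_def
      using leaf3_onD(1,2)[OF sol1 x] leaf3_onD(1,2)[OF sol2 x]
      by (auto intro!: derivative_eq_intros simp: algebra_simps)
  next
    fix x assume x: "\<bar>x\<bar> < b"
    define a where "a = \<bar>r1 x - r2 x\<bar>"
    define c where "c = \<bar>r1' x - r2' x\<bar>"
    have lip: "\<bar>r1 x ^ 5 - r2 x ^ 5\<bar> \<le> 5 * a"
      unfolding a_def using abs_power_diff_le[of "r1 x" "r2 x" 5]
        leaf3_on_abs_le_one[OF sol1 x] leaf3_on_abs_le_one[OF sol2 x] by simp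
    have "\<bar>w' x\<bar> \<le> \<bar>2 * (r1 x - r2 x) * (r1' x - r2' x)\<bar>
        + \<bar>6 * (r1' x - r2' x) * (r1 x ^ 5 - r2 x ^ 5)\<bar>"
      unfolding w'_def by (rule abs_triangle_ineq4)
    also have "\<dots> = 2 * a * c + 6 * c * \<bar>r1 x ^ 5 - r2 x ^ 5\<bar>"
      by (simp only: a_def c_def abs_mult abs_numeral mult.assoc)
    also have "\<dots> \<le> 2 * a * c + 6 * c * (5 * a)"
      using mult_left_mono[OF lip, of "6 * c"] by (simp add: c_def)
    also have "\<dots> \<le> 16 * (a^2 + c^2)"
      using sum_squares_bound[of a c] by simp
    finally show "\<bar>w' x\<bar> \<le> 16 * w x" by (simp add: w_def a_def c_def)
  qed (use init \<open>\<bar>t\<bar> < b\<close> in \<open>simp_all add: w_def\<close>)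
  then show ?thesis by (simp add: w_def sum_power2_eq_zero_iff)
qed

section \<open>The duplication map\<close>

definition doubling_den :: "real \<Rightarrow> real" where
  "doubling_den c = 1 + 8 * c^2 + 8 * c^6 - 8 * c^8"

definition doubling :: "real \<Rightarrow> real" where
  "doubling c = (2 * c^2 + 2 * c^4 - 1) / sqrt (doubling_den c)"

definition doubling_deriv :: "real \<Rightarrow> real" where
  "doubling_deriv c = 12 * c * (1 + 2 * c^2 + 6 * c^4 - 4 * c^6 + 4 * c^8)
     / (doubling_den c * sqrt (doubling_den c))"

definition doubling_deriv2 :: "real \<Rightarrow> real" where
  "doubling_deriv2 c = 12 * (1 - 10 * c^2 + 30 * c^4 + 4 * c^6 - 100 * c^8 + 144 * c^10
       + 400 * c^12 - 160 * c^14 + 96 * c^16)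
     / (doubling_den c ^ 2 * sqrt (doubling_den c))"

lemma doubling_den_ge_one:
  assumes "\<bar>c\<bar> \<le> 1"
  shows "1 \<le> doubling_den c"
proof -
  have "c^2 \<le> 1" using assms by (simp add: abs_square_le_1)
  then have "0 \<le> c^6 * (1 - c^2)" by simp
  moreover have "doubling_den c = 1 + 8 * c^2 + 8 * (c^6 * (1 - c^2))"
    unfolding doubling_den_def by algebra
  ultimately show ?thesis by (smt (verit) zero_le_power2)
qed

lemma has_real_derivative_doubling_den:
  "(doubling_den has_real_derivative 16 * c + 48 * c^5 - 64 * c^7) (at c)"
  unfolding doubling_den_def[abs_def] by (auto intro!: derivative_eq_intros)

lemma has_real_derivative_doubling:
  assumes "0 < doubling_den c"
  shows "(doubling has_real_derivative doubling_deriv c) (at c)"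
proof -
  define q where "q = sqrt (doubling_den c)"
  have q: "0 < q" "doubling_den c = q^2" using assms by (simp_all add: q_def)
  have num: "12 * c * (1 + 2 * c^2 + 6 * c^4 - 4 * c^6 + 4 * c^8)
      = (4 * c + 8 * c^3) * doubling_den c
        - (2 * c^2 + 2 * c^4 - 1) * (8 * c + 24 * c^5 - 32 * c^7)"
    unfolding doubling_den_def by algebra
  show ?thesis
    unfolding doubling_def[abs_def]
    apply (rule DERIV_cong)
    using assms apply (auto intro!: derivative_eq_intros has_real_derivative_doubling_den)[1]
    unfolding doubling_deriv_def num q_def[symmetric] unfolding q(2)
    using q(1) by (simp add: field_simps power2_eq_square)
qed

lemma has_real_derivative_doubling_deriv:
  assumes "0 < doubling_den c"
  shows "(doubling_deriv has_real_derivative doubling_deriv2 c) (at c)"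
proof -
  define q where "q = sqrt (doubling_den c)"
  have q: "0 < q" "doubling_den c = q^2" using assms by (simp_all add: q_def)
  have num: "12 * (1 - 10 * c^2 + 30 * c^4 + 4 * c^6 - 100 * c^8 + 144 * c^10
       + 400 * c^12 - 160 * c^14 + 96 * c^16)
      = (12 + 72 * c^2 + 360 * c^4 - 336 * c^6 + 432 * c^8) * doubling_den c
        - 12 * c * (1 + 2 * c^2 + 6 * c^4 - 4 * c^6 + 4 * c^8)
          * (24 * c + 72 * c^5 - 96 * c^7)"
    unfolding doubling_den_def by algebra
  show ?thesis
    unfolding doubling_deriv_def[abs_def]
    apply (rule DERIV_cong)
    using assms apply (auto intro!: derivative_eq_intros has_real_derivative_doubling_den)[1]
    unfolding doubling_deriv2_def num q_def[symmetric] unfolding q(2)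
    using q(1) by (simp add: field_simps power2_eq_square) algebra
qed

(* For a solution r, the derivative of t |-> doubling (r (t / 2)) is
   doubling_deriv (r (t / 2)) * r' (t / 2) / 2. Using (r')^2 = 1 - r^6, the next two identities
   are exactly its energy identity and its differential equation. *)
lemma doubling_energy:
  assumes "0 < doubling_den c"
  shows "doubling_deriv c ^ 2 * (1 - c^6) / 4 + doubling c ^ 6 = 1"
proof -
  define q where "q = sqrt (doubling_den c)"
  have q: "0 < q" "doubling_den c = q^2" using assms by (simp_all add: q_def)
  have "(12 * c * (1 + 2 * c^2 + 6 * c^4 - 4 * c^6 + 4 * c^8)) ^ 2 * (1 - c^6) / 4
      + (2 * c^2 + 2 * c^4 - 1) ^ 6 = doubling_den c ^ 3"
    unfolding doubling_den_def by algebra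
  then show ?thesis
    unfolding doubling_deriv_def doubling_def q_def[symmetric] unfolding q(2)
    using q(1) by (simp add: field_simps power2_eq_square) algebra
qed

lemma doubling_ode:
  assumes "0 < doubling_den c"
  shows "doubling_deriv2 c * (1 - c^6) - 3 * c^5 * doubling_deriv c = - 12 * doubling c ^ 5"
proof -
  define q where "q = sqrt (doubling_den c)"
  have q: "0 < q" "doubling_den c = q^2" using assms by (simp_all add: q_def)
  have "12 * (1 - 10 * c^2 + 30 * c^4 + 4 * c^6 - 100 * c^8 + 144 * c^10
       + 400 * c^12 - 160 * c^14 + 96 * c^16) * (1 - c^6)
      - 3 * c^5 * (12 * c * (1 + 2 * c^2 + 6 * c^4 - 4 * c^6 + 4 * c^8)) * doubling_den c
      + 12 * (2 * c^2 + 2 * c^4 - 1) ^ 5 = 0"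
    unfolding doubling_den_def by algebra
  then show ?thesis
    unfolding doubling_deriv_def doubling_deriv2_def doubling_def q_def[symmetric]
    unfolding q(2)
    using q(1) by (simp add: field_simps power2_eq_square) algebra
qed

lemma doubling_one: "doubling 1 = 1"
proof -
  have "sqrt 9 = (3 :: real)" by (simp add: real_sqrt_eq_iff[symmetric])
  then show ?thesis by (simp add: doubling_def doubling_den_def)
qed

lemma leaf3_on_doubling:
  assumes sol: "leaf3_on b r r'"
  shows "leaf3_on (2 * b) (\<lambda>t. doubling (r (t / 2)))
    (\<lambda>t. doubling_deriv (r (t / 2)) * r' (t / 2) / 2)"
  unfolding leaf3_on_def
proof (intro allI impI conjI)
  fix t :: real
  assume "\<bar>t\<bar> < 2 * b"
  then have s: "\<bar>t / 2\<bar> < b" by simp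
  have den: "0 < doubling_den (r (t / 2))"
    using doubling_den_ge_one[OF leaf3_on_abs_le_one[OF sol s]] by simp
  have energy: "r' (t / 2) ^ 2 = 1 - r (t / 2) ^ 6"
    using leaf3_onD(3)[OF sol s] by simp
  have half: "((\<lambda>t. t / 2) has_real_derivative 1 / 2) (at t)"
    by (auto intro!: derivative_eq_intros)
  have r: "((\<lambda>t. r (t / 2)) has_real_derivative r' (t / 2) * (1 / 2)) (at t)"
    using DERIV_chain2[OF leaf3_onD(1)[OF sol s] half] by simp
  have r': "((\<lambda>t. r' (t / 2)) has_real_derivative - 3 * r (t / 2) ^ 5 * (1 / 2)) (at t)"
    using DERIV_chain2[OF leaf3_onD(2)[OF sol s] half] by simp
  have D': "((\<lambda>t. doubling_deriv (r (t / 2))) has_real_derivative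
      doubling_deriv2 (r (t / 2)) * (r' (t / 2) * (1 / 2))) (at t)"
    using DERIV_chain2[OF has_real_derivative_doubling_deriv[OF den] r] by simp
  show "((\<lambda>t. doubling (r (t / 2))) has_real_derivative
      doubling_deriv (r (t / 2)) * r' (t / 2) / 2) (at t)"
    using DERIV_chain2[OF has_real_derivative_doubling[OF den] r] by simp
  have "((\<lambda>t. doubling_deriv (r (t / 2)) * r' (t / 2) / 2) has_real_derivative
      (doubling_deriv2 (r (t / 2)) * (1 - r (t / 2) ^ 6)
        - 3 * r (t / 2) ^ 5 * doubling_deriv (r (t / 2))) / 4) (at t)"
    using DERIV_cdivide[OF DERIV_mult[OF D' r'], of 2]
    by (simp add: energy[symmetric] power2_eq_square field_simps)
  then show "((\<lambda>t. doubling_deriv (r (t / 2)) * r' (t / 2) / 2) has_real_derivative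
      - 3 * doubling (r (t / 2)) ^ 5) (at t)"
    by (simp add: doubling_ode[OF den])
  show "(doubling_deriv (r (t / 2)) * r' (t / 2) / 2)\<^sup>2 + doubling (r (t / 2)) ^ 6 = 1"
    using doubling_energy[OF den]
    by (simp add: power_mult_distrib energy field_simps)
qed

section \<open>Local existence by quadrature\<close>

(* Under the substitution r = 1 - w^2 the energy equation (r')^2 = 1 - r^6 becomes
   (2 w')^2 = leaf3_speed_poly w (see leaf3_speed_poly_eq), and leaf3_time w is the time an
   increasing solution needs to reach w from -1. *)
definition leaf3_speed_poly :: "real \<Rightarrow> real" where
  "leaf3_speed_poly w = 6 - 15 * w^2 + 20 * w^4 - 15 * w^6 + 6 * w^8 - w^10"

definition leaf3_time :: "real \<Rightarrow> real" where
  "leaf3_time w = integral {-1..w} (\<lambda>x. 2 / sqrt (leaf3_speed_poly x))"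

lemma leaf3_speed_poly_eq: "w^2 * leaf3_speed_poly w = 1 - (1 - w^2) ^ 6"
  unfolding leaf3_speed_poly_def by algebra

lemma leaf3_speed_poly_pos:
  assumes "\<bar>w\<bar> \<le> 1"
  shows "0 < leaf3_speed_poly w"
proof (cases "w = 0")
  case True
  then show ?thesis by (simp add: leaf3_speed_poly_def)
next
  case False
  then have "0 < w^2" by simp
  moreover have "w^2 \<le> 1" using assms by (simp add: abs_square_le_1)
  ultimately have "(1 - w^2) ^ 6 < 1 ^ 6"
    by (intro power_strict_mono) auto
  then have "0 < w^2 * leaf3_speed_poly w" by (simp add: leaf3_speed_poly_eq)
  then show ?thesis using \<open>0 < w^2\<close> by (simp add: zero_less_mult_iff)
qed

lemma has_real_derivative_leaf3_time:
  assumes "-1 < w" "w < 1"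
  shows "(leaf3_time has_real_derivative 2 / sqrt (leaf3_speed_poly w)) (at w)"
proof -
  have "continuous_on {-1..1} (\<lambda>x. 2 / sqrt (leaf3_speed_poly x))"
    unfolding leaf3_speed_poly_def[abs_def]
  proof (intro continuous_intros ballI)
    fix x :: real
    assume "x \<in> {-1..1}"
    then have "0 < leaf3_speed_poly x" by (intro leaf3_speed_poly_pos) auto
    then show "sqrt (6 - 15 * x^2 + 20 * x^4 - 15 * x^6 + 6 * x^8 - x^10) \<noteq> 0"
      by (simp add: leaf3_speed_poly_def)
  qed
  then have "(leaf3_time has_real_derivative 2 / sqrt (leaf3_speed_poly w)) (at w within {-1..1})"
    unfolding leaf3_time_def[abs_def]
    by (rule integral_has_real_derivative) (use assms in auto)
  then show ?thesis using at_within_Icc_at[OF assms] by simp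
qed

lemma has_real_derivative_leaf3_speed_poly:
  "(leaf3_speed_poly has_real_derivative
     - 30 * w + 80 * w^3 - 90 * w^5 + 48 * w^7 - 10 * w^9) (at w)"
  unfolding leaf3_speed_poly_def[abs_def] by (auto intro!: derivative_eq_intros)

lemma leaf3_speed_ode_local_solution:
  "\<exists>a>0. \<exists>w. w 0 = 0 \<and> (\<forall>t. \<bar>t\<bar> < a \<longrightarrow>
     \<bar>w t\<bar> < 1 \<and> (w has_real_derivative sqrt (leaf3_speed_poly (w t)) / 2) (at t))"
proof -
  define T0 where "T0 = leaf3_time 0"
  define W where "W = inv_into {-1/2..1/2} leaf3_time"
  define a where "a = min (T0 - leaf3_time (-1/2)) (leaf3_time (1/2) - T0)"
  have T_deriv: "(leaf3_time has_real_derivative 2 / sqrt (leaf3_speed_poly x)) (at x)"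
    and T_deriv_pos: "0 < 2 / sqrt (leaf3_speed_poly x)" if "-1/2 \<le> x" "x \<le> 1/2" for x
    using that has_real_derivative_leaf3_time leaf3_speed_poly_pos[of x] by auto
  have mono: "strict_mono_on {-1/2..1/2} leaf3_time"
    using T_deriv T_deriv_pos by (rule deriv_pos_imp_strict_mono_on)
  then have "leaf3_time (-1/2) < T0" "T0 < leaf3_time (1/2)"
    unfolding T0_def
    using strict_mono_onD[OF mono, of "-1/2" 0] strict_mono_onD[OF mono, of 0 "1/2"] by auto
  then have "0 < a" by (simp add: a_def)
  have "W T0 = 0"
    unfolding W_def T0_def using strict_mono_on_imp_inj_on[OF mono] by (simp add: inv_into_f_f)
  moreover have "\<bar>W (t + T0)\<bar> < 1 \<and>
      ((\<lambda>t. W (t + T0)) has_real_derivative sqrt (leaf3_speed_poly (W (t + T0))) / 2) (at t)"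
    if "\<bar>t\<bar> < a" for t
  proof -
    have z: "leaf3_time (-1/2) < t + T0" "t + T0 < leaf3_time (1/2)"
      using that by (auto simp: a_def)
    have "-1/2 < W (t + T0) \<and> W (t + T0) < 1/2 \<and>
        (W has_real_derivative inverse (2 / sqrt (leaf3_speed_poly (W (t + T0))))) (at (t + T0))"
      unfolding W_def using inv_into_increasing_has_real_derivative[OF T_deriv T_deriv_pos _ z]
      by simp
    then have W': "(W has_real_derivative sqrt (leaf3_speed_poly (W (t + T0))) / 2) (at (t + T0))"
      and "\<bar>W (t + T0)\<bar> < 1" by auto
    have "((\<lambda>t. W (t + T0)) has_real_derivative sqrt (leaf3_speed_poly (W (t + T0))) / 2 * 1) (at t)"
      by (rule DERIV_chain2[where g = "\<lambda>t. t + T0", OF W']) (auto intro!: derivative_eq_intros)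
    with \<open>\<bar>W (t + T0)\<bar> < 1\<close> show ?thesis by simp
  qed
  ultimately show ?thesis
    using \<open>0 < a\<close> by (intro exI[of _ a] conjI exI[of _ "\<lambda>t. W (t + T0)"]) auto
qed

lemma leaf3_local_existence: "\<exists>a>0. \<exists>r r'. leaf3_on a r r' \<and> r 0 = 1 \<and> r' 0 = 0"
proof -
  obtain a w where "0 < a" and w0: "w 0 = 0" and
    w: "\<And>t. \<bar>t\<bar> < a \<Longrightarrow>
      \<bar>w t\<bar> < 1 \<and> (w has_real_derivative sqrt (leaf3_speed_poly (w t)) / 2) (at t)"
    using leaf3_speed_ode_local_solution by blast
  define r where "r t = 1 - w t ^ 2" for t
  define r' where "r' t = - w t * sqrt (leaf3_speed_poly (w t))" for t
  have "leaf3_on a r r'"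
    unfolding leaf3_on_def
  proof (intro allI impI conjI)
    fix t assume "\<bar>t\<bar> < a"
    define v where "v = w t"
    have v: "\<bar>v\<bar> < 1" and dv: "(w has_real_derivative sqrt (leaf3_speed_poly (w t)) / 2) (at t)"
      using w[OF \<open>\<bar>t\<bar> < a\<close>] by (simp_all add: v_def)
    have P: "0 < leaf3_speed_poly v" using v by (simp add: leaf3_speed_poly_pos)
    define q where "q = sqrt (leaf3_speed_poly v)"
    have q: "0 < q" "leaf3_speed_poly v = q^2" using P by (simp_all add: q_def)
    show "(r has_real_derivative r' t) (at t)"
      unfolding r_def[abs_def] r'_def using dv by (auto intro!: derivative_eq_intros)
    have ode: "leaf3_speed_poly v / 2
        + v * (- 30 * v + 80 * v^3 - 90 * v^5 + 48 * v^7 - 10 * v^9) / 4 = 3 * (1 - v^2) ^ 5"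
      unfolding leaf3_speed_poly_def by algebra
    show "(r' has_real_derivative - 3 * r t ^ 5) (at t)"
      unfolding r'_def[abs_def] r_def
      apply (rule DERIV_cong)
      using dv P apply (auto intro!: derivative_eq_intros
          DERIV_chain2[OF has_real_derivative_leaf3_speed_poly] simp: v_def[symmetric])[1]
      unfolding v_def[symmetric] q_def[symmetric]
      using q(1) ode[unfolded q(2)] by (simp add: field_simps power2_eq_square) algebra
    show "r' t ^ 2 + r t ^ 6 = 1"
      unfolding r_def r'_def v_def[symmetric]
      using P leaf3_speed_poly_eq[of v] by (simp add: power_mult_distrib)
  qed
  moreover have "r 0 = 1" "r' 0 = 0" by (simp_all add: r_def r'_def w0)
  ultimately show ?thesis using \<open>0 < a\<close> by blast
qed

lemma leaf3_existence_on: "\<exists>r r'. leaf3_on b r r' \<and> r 0 = 1 \<and> r' 0 = 0"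
proof -
  obtain a where "0 < a" and local: "\<exists>r r'. leaf3_on a r r' \<and> r 0 = 1 \<and> r' 0 = 0"
    using leaf3_local_existence by blast
  have doubled: "\<exists>r r'. leaf3_on (2 ^ k * a) r r' \<and> r 0 = 1 \<and> r' 0 = 0" for k
  proof (induction k)
    case 0
    then show ?case using local by simp
  next
    case (Suc k)
    then obtain r r' where "leaf3_on (2 ^ k * a) r r'" "r 0 = 1" "r' 0 = 0" by blast
    then have "leaf3_on (2 ^ Suc k * a) (\<lambda>t. doubling (r (t / 2)))
        (\<lambda>t. doubling_deriv (r (t / 2)) * r' (t / 2) / 2)"
      and "doubling (r (0 / 2)) = 1" "doubling_deriv (r (0 / 2)) * r' (0 / 2) / 2 = 0"
      using leaf3_on_doubling[of "2 ^ k * a" r r'] by (simp_all add: doubling_one mult.assoc)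
    then show ?case by blast
  qed
  obtain k where "b / a < 2 ^ k" using real_arch_pow[of 2 "b / a"] by auto
  then have "b \<le> 2 ^ k * a" using \<open>0 < a\<close> by (simp add: pos_divide_less_eq)
  then show ?thesis using doubled[of k] leaf3_on_mono by blast
qed

lemma leaf3_global_existence: "\<exists>r r'. (\<forall>b. leaf3_on b r r') \<and> r 0 = 1 \<and> r' 0 = 0"
proof -
  obtain R R' where R: "\<And>b. leaf3_on b (R b) (R' b)"
    and init: "\<And>b. R b 0 = 1" "\<And>b. R' b 0 = 0"
    using leaf3_existence_on by metis
  define r where "r t = R (\<bar>t\<bar> + 1) t" for t
  define r' where "r' t = R' (\<bar>t\<bar> + 1) t" for t
  have agree: "r x = R c x \<and> r' x = R' c x" if "\<bar>x\<bar> < c" for x c :: real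
    unfolding r_def r'_def
    by (rule leaf3_on_unique[where b = "min c (\<bar>x\<bar> + 1)"])
      (use that init in \<open>auto intro: leaf3_on_mono[OF R]\<close>)
  have "leaf3_on b r r'" for b
    unfolding leaf3_on_def
  proof (intro allI impI conjI)
    fix t :: real
    define c where "c = \<bar>t\<bar> + 1"
    define S where "S = {-c<..<c}"
    have S: "open S" "t \<in> S" by (auto simp: S_def c_def)
    have "\<bar>t\<bar> < c" by (simp add: c_def)
    note sol = leaf3_onD[OF R this]
    have on_S: "R c x = r x" "R' c x = r' x" if "x \<in> S" for x
      using agree[of x c] that by (simp_all add: S_def abs_less_iff)
    show "(r has_real_derivative r' t) (at t)"
      using has_field_derivative_transform_within_open[OF sol(1) S on_S(1)] on_S(2)[OF S(2)]
      by simp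
    show "(r' has_real_derivative - 3 * r t ^ 5) (at t)"
      using has_field_derivative_transform_within_open[OF sol(2) S on_S(2)] on_S(1)[OF S(2)]
      by simp
    show "r' t ^ 2 + r t ^ 6 = 1"
      using sol(3) on_S[OF S(2)] by simp
  qed
  moreover have "r 0 = 1" "r' 0 = 0" by (simp_all add: r_def r'_def init)
  ultimately show ?thesis by blast
qed

lemma leaf_ivp_3_iff: "leaf_ivp 3 r \<longleftrightarrow> (\<exists>r'. (\<forall>b. leaf3_on b r r') \<and> r 0 = 1 \<and> r' 0 = 0)"
proof
  assume "leaf_ivp 3 r"
  then obtain r' where d: "\<And>l. (r has_real_derivative r' l) (at l)"
      "\<And>l. (r' has_real_derivative - 3 * r l ^ 5) (at l)" and init: "r 0 = 1" "r' 0 = 0"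
    unfolding leaf_ivp_def by auto
  have "\<forall>x. ((\<lambda>t. r' t ^ 2 + r t ^ 6) has_real_derivative 0) (at x)"
    using d by (auto intro!: derivative_eq_intros simp: algebra_simps)
  then have "r' t ^ 2 + r t ^ 6 = r' 0 ^ 2 + r 0 ^ 6" for t
    by (rule DERIV_isconst_all)
  then have "\<forall>b. leaf3_on b r r'" unfolding leaf3_on_def using d init by simp
  then show "\<exists>r'. (\<forall>b. leaf3_on b r r') \<and> r 0 = 1 \<and> r' 0 = 0" using init by blast
next
  assume "\<exists>r'. (\<forall>b. leaf3_on b r r') \<and> r 0 = 1 \<and> r' 0 = 0"
  then obtain r' where "\<And>b. leaf3_on b r r'" "r 0 = 1" "r' 0 = 0" by blast
  then have "(r has_real_derivative r' l) (at l)" "(r' has_real_derivative - 3 * r l ^ 5) (at l)"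
    for l using leaf3_onD(1,2)[of "\<bar>l\<bar> + 1" r r' l] by simp_all
  then show "leaf_ivp 3 r"
    unfolding leaf_ivp_def using \<open>r 0 = 1\<close> \<open>r' 0 = 0\<close> by auto
qed

lemma leaf_ivp_3_unique:
  assumes "leaf_ivp 3 r1" "leaf_ivp 3 r2"
  shows "r1 = r2"
proof
  fix t
  obtain r1' where "\<And>b. leaf3_on b r1 r1'" "r1 0 = 1" "r1' 0 = 0"
    using assms(1) unfolding leaf_ivp_3_iff by blast
  moreover obtain r2' where "\<And>b. leaf3_on b r2 r2'" "r2 0 = 1" "r2' 0 = 0"
    using assms(2) unfolding leaf_ivp_3_iff by blast
  ultimately show "r1 t = r2 t"
    using leaf3_on_unique[of "\<bar>t\<bar> + 1" r1 r1' r2 r2' t] by simp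
qed

lemma leaf_ivp_3_cleaf: "leaf_ivp 3 (cleaf 3)"
proof -
  obtain r where "leaf_ivp 3 r"
    using leaf3_global_existence unfolding leaf_ivp_3_iff by blast
  show ?thesis
    unfolding cleaf_def
    by (rule theI[where P = "leaf_ivp 3", OF \<open>leaf_ivp 3 r\<close>
          leaf_ivp_3_unique[OF _ \<open>leaf_ivp 3 r\<close>]])
qed

lemma leaf_ivp_3_doubling:
  assumes "leaf_ivp 3 r"
  shows "leaf_ivp 3 (\<lambda>t. doubling (r (t / 2)))"
proof -
  obtain r' where sol: "\<And>b. leaf3_on b r r'" and init: "r 0 = 1" "r' 0 = 0"
    using assms unfolding leaf_ivp_3_iff by blast
  have "leaf3_on b (\<lambda>t. doubling (r (t / 2)))
      (\<lambda>t. doubling_deriv (r (t / 2)) * r' (t / 2) / 2)" for b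
    using leaf3_on_doubling[OF sol[of "b / 2"]] by simp
  moreover have "doubling (r (0 / 2)) = 1" "doubling_deriv (r (0 / 2)) * r' (0 / 2) / 2 = 0"
    using init by (simp_all add: doubling_one)
  ultimately show ?thesis
    unfolding leaf_ivp_3_iff by blast
qed

theorem mainTheorem7:
  fixes l :: real
  shows "cleaf 3 (2 * l) =
    (2 * (cleaf 3 l)^2 + 2 * (cleaf 3 l)^4 - 1) /
    sqrt (1 + 8 * (cleaf 3 l)^2 + 8 * (cleaf 3 l)^6 - 8 * (cleaf 3 l)^8)"
proof -
  have "(\<lambda>t. doubling (cleaf 3 (t / 2))) = cleaf 3"
    using leaf_ivp_3_unique leaf_ivp_3_doubling leaf_ivp_3_cleaf by blast
  then have "cleaf 3 (2 * l) = doubling (cleaf 3 l)"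
    by (metis nonzero_mult_div_cancel_left zero_neq_numeral)
  then show ?thesis by (simp add: doubling_def doubling_den_def)
qed

end
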